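(* On the subspace domain $\mathcal S(\mathcal H_V)$ with $(\alpha_s,\gamma_s)$, define for every subspace $Q$: $\llbracket\mathbf{skip}\rrbracket^\#(Q)=Q$; $\llbracket\bar q:=|0\rangle\rrbracket^\#(Q)=\{|0\rangle_{\bar q}\otimes|\psi\rangle:|\psi\rangle\in\lceil\mathrm{Tr}_{\bar q}(Q)\rceil\}$; $\llbracket\bar q\mathrel{*{=}}U\rrbracket^\#(Q)=\{U|\psi\rangle:|\psi\rangle\in Q\}$; $\llbracket\mathbf{assert}\ P[\bar q]\rrbracket^\#(Q)=\mathrm{span}\{P|\psi\rangle:|\psi\rangle\in Q\}$. Each of these is a complete abstraction of the corresponding $\llbracket e\rrbracket$. Moreover, for any program $S$, if $\llbracket S\rrbracket(\rho)=\sum_{k\in K}E_k\rho E_k^\dagger$ is a Kraus representation, then the operator $Q\mapsto\mathrm{span}\{E_k|\psi\rangle:k\in K,|\psi\rangle\in Q\}$ is a complete abstraction of $\llbracket S\rrbracket$, i.e. $\alpha_s(\llbracket S\rrbracket(R))=\mathrm{span}\{E_k|\psi\rangle:k\in K,|\psi\rangle\in\alpha_s(R)\}$ for all $R\subseteq\mathcal D(\mathcal H_V)$.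
   Context: Fix a finite set $V$ of quantum variables, each a qubit with state space $\mathcal H_q\cong\mathbb C^2$; for $W\subseteq V$, $\mathcal H_W=\bigotimes_{q\in W}\mathcal H_q$. Operators and subspaces on $\mathcal H_W$ are identified with their cylindrical extensions to $\mathcal H_V$, and a subspace is identified with its orthogonal projector (so $\mathrm{Tr}_{\bar q}(Q)$ is the partial trace over $\bar q$ of the projector onto $Q$); $P^\perp$ is the orthocomplement; $\lceil\rho\rceil$ is the support of $\rho$. $\mathcal D(\mathcal H_V)$ is the set of partial density operators (positive, trace $\le1$). Programs: $S::=\mathbf{skip}\mid \bar q:=|0\rangle\mid \bar q\mathrel{*{=}}U\mid \mathbf{assert}\ P[\bar q]\mid S_0;S_1\mid \mathbf{if}\ P[\bar q]\ \mathbf{then}\ S_1\ \mathbf{else}\ S_0\ \mathbf{end}\mid\mathbf{while}\ P[\bar q]\ \mathbf{do}\ S\ \mathbf{end}$, with $\bar q=q_1,\dots,q_t$ distinct variables, $U$ unitary on $\mathcal H_{\bar q}$, $P$ a subspace of $\mathcal H_{\bar q}$; the first four forms are the basic commands. Semantics: $\llbracket\mathbf{skip}\rrbracket(\rho)=\rho$; $\llbracket\bar q:=|0\rangle\rrbracket(\rho)=\sum_{i=0}^{2^t-1}|0\rangle_{\bar q}\langle i|\rho|i\rangle_{\bar q}\langle0|$; $\llbracket\bar q\mathrel{*{=}}U\rrbracket(\rho)=U\rho U^\dagger$; $\llbracket\mathbf{assert}\ P[\bar q]\rrbracket(\rho)=P\rho P$; $\llbracket S_0;S_1\rrbracket=\llbracket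 S_1\rrbracket\circ\llbracket S_0\rrbracket$; $\llbracket\mathbf{if}\ P[\bar q]\ \mathbf{then}\ S_1\ \mathbf{else}\ S_0\ \mathbf{end}\rrbracket(\rho)=\llbracket\mathbf{assert}\ P[\bar q];S_1\rrbracket(\rho)+\llbracket\mathbf{assert}\ P^\perp[\bar q];S_0\rrbracket(\rho)$; $\llbracket\mathbf{while}\ P[\bar q]\ \mathbf{do}\ S\ \mathbf{end}\rrbracket(\rho)=\sum_{i\ge0}\llbracket(\mathbf{assert}\ P[\bar q];S)^i;\mathbf{assert}\ P^\perp[\bar q]\rrbracket(\rho)$. Each $\llbracket S\rrbracket$ is a completely positive trace-nonincreasing map and so admits a finite Kraus representation. $\llbracket S\rrbracket(R)=\{\llbracket S\rrbracket(\rho):\rho\in R\}$ for $R\subseteq\mathcal D(\mathcal H_V)$. The subspace domain $\mathcal S(\mathcal H_V)$: all subspaces of $\mathcal H_V$, ordered by inclusion, join $P\vee Q=\mathrm{span}(P\cup Q)$; $\gamma_s(P)=\{\rho:\lceil\rho\rceil\subseteq P\}$, $\alpha_s(R)=\bigvee\{\lceil\rho\rceil:\rho\in R\}$. An operator $f^\#$ on $\mathcal S(\mathcal H_V)$ is a complete abstraction of $f$ if $\alpha_s\circ f=f^\#\circ\alpha_s$. *)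

theory Defs
  imports Complex_Main
begin

text \<open>Quantum variables form a finite type 'v (the set V). A computational basis state of
  H_V is an assignment 'v \<Rightarrow> bool; state vectors of H_V are functions from basis states to
  complex numbers; operators on H_V are matrices indexed by basis states.\<close>

type_synonym 'v bas = "'v \<Rightarrow> bool"
type_synonym 'v state = "'v bas \<Rightarrow> complex"
type_synonym 'v op = "'v bas \<Rightarrow> 'v bas \<Rightarrow> complex"

definition mv :: "'v::finite op \<Rightarrow> 'v state \<Rightarrow> 'v state" where
  "mv A \<psi> = (\<lambda>i. \<Sum>j\<in>UNIV. A i j * \<psi> j)"

definition mmul :: "'v::finite op \<Rightarrow> 'v op \<Rightarrow> 'v op" where
  "mmul A B = (\<lambda>i j. \<Sum>k\<in>UNIV. A i k * B k j)"

definition adj :: "'v op \<Rightarrow> 'v op" where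
  "adj A = (\<lambda>i j. cnj (A j i))"

definition idop :: "'v op" where
  "idop = (\<lambda>i j. if i = j then 1 else 0)"

definition unitary_op :: "'v::finite op \<Rightarrow> bool" where
  "unitary_op U \<longleftrightarrow> mmul (adj U) U = idop \<and> mmul U (adj U) = idop"

definition cinner :: "'v::finite state \<Rightarrow> 'v state \<Rightarrow> complex" where
  "cinner \<phi> \<psi> = (\<Sum>b\<in>UNIV. cnj (\<phi> b) * \<psi> b)"

definition trace_op :: "'v::finite op \<Rightarrow> complex" where
  "trace_op A = (\<Sum>i\<in>UNIV. A i i)"

definition positive_op :: "'v::finite op \<Rightarrow> bool" where
  "positive_op A \<longleftrightarrow> (\<forall>\<psi>. cinner \<psi> (mv A \<psi>) \<in> \<real> \<and> 0 \<le> Re (cinner \<psi> (mv A \<psi>)))"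

definition dens :: "'v::finite op set" where
  "dens = {\<rho>. positive_op \<rho> \<and> Re (trace_op \<rho>) \<le> 1}"

definition cspan :: "'v state set \<Rightarrow> 'v state set" where
  "cspan S = {v. \<exists>F c. finite F \<and> F \<subseteq> S \<and> v = (\<lambda>b. \<Sum>x\<in>F. c x * x b)}"

definition is_subspace :: "'v state set \<Rightarrow> bool" where
  "is_subspace Q \<longleftrightarrow> cspan Q = Q"

definition proj :: "'v::finite state set \<Rightarrow> 'v op" where
  "proj Q = (THE P. adj P = P \<and> mmul P P = P \<and> range (mv P) = Q)"

definition supp :: "'v::finite op \<Rightarrow> 'v state set" where
  "supp \<rho> = range (mv \<rho>)"

text \<open>Local structure: basis states of H_W are assignments that are False outside W.\<close>
definition rst :: "'v set \<Rightarrow> 'v bas \<Rightarrow> 'v bas" where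
  "rst W b = (\<lambda>v. v \<in> W \<and> b v)"

definition BW :: "'v set \<Rightarrow> 'v bas set" where
  "BW W = {b. \<forall>v. v \<notin> W \<longrightarrow> \<not> b v}"

definition merge :: "'v set \<Rightarrow> 'v bas \<Rightarrow> 'v bas \<Rightarrow> 'v bas" where
  "merge W k i = (\<lambda>v. if v \<in> W then k v else i v)"

text \<open>Vectors of H_W (embedded as vectors supported on the local basis) and subspaces of H_W.\<close>
definition local_vecs :: "'v set \<Rightarrow> 'v state set" where
  "local_vecs W = {\<psi>. \<forall>b. b \<notin> BW W \<longrightarrow> \<psi> b = 0}"

definition local_subspace :: "'v set \<Rightarrow> 'v state set \<Rightarrow> bool" where
  "local_subspace W P \<longleftrightarrow> is_subspace P \<and> P \<subseteq> local_vecs W"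

definition local_perp :: "'v::finite set \<Rightarrow> 'v state set \<Rightarrow> 'v state set" where
  "local_perp W P = {\<psi> \<in> local_vecs W. \<forall>\<phi>\<in>P. cinner \<phi> \<psi> = 0}"

text \<open>Cylindrical extension of an operator on H_W (matrix indexed by local basis states) to H_V.\<close>
definition cyl :: "'v set \<Rightarrow> 'v op \<Rightarrow> 'v op" where
  "cyl W A = (\<lambda>i j. if (\<forall>v. v \<notin> W \<longrightarrow> i v = j v) then A (rst W i) (rst W j) else 0)"

text \<open>Partial trace over W; the result is an operator on H_(V-W).\<close>
definition ptrace :: "'v set \<Rightarrow> 'v op \<Rightarrow> 'v op" where
  "ptrace W A = (\<lambda>i j. if i \<in> BW (- W) \<and> j \<in> BW (- W)
      then (\<Sum>k\<in>BW W. A (merge W k i) (merge W k j)) else 0)"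

text \<open>|0>_W tensor psi, for psi a vector of H_(V-W).\<close>
definition tens0 :: "'v set \<Rightarrow> 'v state \<Rightarrow> 'v state" where
  "tens0 W \<psi> = (\<lambda>b. if (\<forall>v\<in>W. \<not> b v) then \<psi> (rst (- W) b) else 0)"

definition ket0bra :: "'v bas \<Rightarrow> 'v op" where
  "ket0bra i = (\<lambda>a b. if a = (\<lambda>_. False) \<and> b = i then 1 else 0)"

definition sandwich :: "'v::finite op \<Rightarrow> 'v op \<Rightarrow> 'v op" where
  "sandwich E \<rho> = mmul (mmul E \<rho>) (adj E)"

text \<open>Programs. Variable lists qbar are represented by the set of their (distinct) variables.\<close>
datatype 'v prog =
    Skip
  | Init "'v set"
  | Apply "'v set" "'v op"
  | Assert "'v set" "'v state set"
  | Seq "'v prog" "'v prog"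
  | IfP "'v set" "'v state set" "'v prog" "'v prog"
  | WhileP "'v set" "'v state set" "'v prog"

fun wf_prog :: "'v::finite prog \<Rightarrow> bool" where
  "wf_prog Skip = True"
| "wf_prog (Init W) = True"
| "wf_prog (Apply W U) = unitary_op (cyl W U)"
| "wf_prog (Assert W P) = local_subspace W P"
| "wf_prog (Seq S0 S1) = (wf_prog S0 \<and> wf_prog S1)"
| "wf_prog (IfP W P S1 S0) = (local_subspace W P \<and> wf_prog S1 \<and> wf_prog S0)"
| "wf_prog (WhileP W P S) = (local_subspace W P \<and> wf_prog S)"

primrec sem :: "'v::finite prog \<Rightarrow> 'v op \<Rightarrow> 'v op" where
  "sem Skip \<rho> = \<rho>"
| "sem (Init W) \<rho> = (\<lambda>a b. \<Sum>i\<in>BW W. sandwich (cyl W (ket0bra i)) \<rho> a b)"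
| "sem (Apply W U) \<rho> = sandwich (cyl W U) \<rho>"
| "sem (Assert W P) \<rho> = sandwich (cyl W (proj P)) \<rho>"
| "sem (Seq S0 S1) \<rho> = sem S1 (sem S0 \<rho>)"
| "sem (IfP W P S1 S0) \<rho> = (\<lambda>a b.
      sem S1 (sandwich (cyl W (proj P)) \<rho>) a b
    + sem S0 (sandwich (cyl W (proj (local_perp W P))) \<rho>) a b)"
| "sem (WhileP W P S) \<rho> = (\<lambda>a b. \<Sum>n. sandwich (cyl W (proj (local_perp W P)))
      (((\<lambda>\<sigma>. sem S (sandwich (cyl W (proj P)) \<sigma>)) ^^ n) \<rho>) a b)"

definition alpha_s :: "'v::finite op set \<Rightarrow> 'v state set" where
  "alpha_s R = cspan (\<Union>\<rho>\<in>R. supp \<rho>)"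

definition gamma_s :: "'v::finite state set \<Rightarrow> 'v op set" where
  "gamma_s P = {\<rho> \<in> dens. supp \<rho> \<subseteq> P}"

definition complete_abs :: "('v::finite op \<Rightarrow> 'v op) \<Rightarrow> ('v state set \<Rightarrow> 'v state set) \<Rightarrow> bool" where
  "complete_abs f fs \<longleftrightarrow> (\<forall>R. R \<subseteq> dens \<longrightarrow> alpha_s (f ` R) = fs (alpha_s R))"

end

theory Submission
  imports Defs "HOL-Analysis.Linear_Algebra" "HOL-Analysis.Finite_Cartesian_Product"
begin

text \<open>Everything reduces to one fact about a Kraus sum \<open>M = \<Sum>\<^sub>k E\<^sub>k \<rho> E\<^sub>k\<^sup>\<dagger>\<close> with
  \<open>\<rho>\<close> positive: its range is the span of the vectors \<open>E\<^sub>k \<psi>\<close>, \<open>\<psi>\<close> in the range of \<open>\<rho>\<close>.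
  One inclusion is immediate. For the other, if \<open>z\<close> is orthogonal to the range of \<open>M\<close>, then
  \<open>0 = \<langle>z, M z\<rangle> = \<Sum>\<^sub>k \<langle>E\<^sub>k\<^sup>\<dagger> z, \<rho> E\<^sub>k\<^sup>\<dagger> z\<rangle>\<close> is a sum of non-negative terms, so
  \<open>\<rho> E\<^sub>k\<^sup>\<dagger> z = 0\<close> and \<open>z\<close> is orthogonal to every \<open>E\<^sub>k \<rho> u\<close>. Since \<open>\<alpha>\<^sub>s\<close> takes spans of
  supports and spans commute with unions and linear images, every Kraus representation yields
  the stated complete abstraction. The basic commands are instances: a unitary or a projector
  is a single Kraus operator, and initialisation has the Kraus operators \<open>|0\<rangle>\<langle>i|\<close>, whose
  action on a subspace \<open>Q\<close> is read off the partial trace of its projector, itself the Kraus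
  sum of the partial bras \<open>\<langle>i|\<^sub>W\<close>.\<close>

section \<open>Complex subspaces and spans\<close>

definition csubspace :: "'v state set \<Rightarrow> bool" where
  "csubspace T \<longleftrightarrow> (\<lambda>_. 0) \<in> T \<and> (\<forall>x\<in>T. \<forall>y\<in>T. (\<lambda>b. x b + y b) \<in> T)
     \<and> (\<forall>c. \<forall>x\<in>T. (\<lambda>b. c * x b) \<in> T)"

lemma
  assumes "csubspace T"
  shows csubspace_zero: "(\<lambda>_. 0) \<in> T"
    and csubspace_add: "x \<in> T \<Longrightarrow> y \<in> T \<Longrightarrow> (\<lambda>b. x b + y b) \<in> T"
    and csubspace_scale: "x \<in> T \<Longrightarrow> (\<lambda>b. c * x b) \<in> T"
  using assms unfolding csubspace_def by auto

lemma csubspace_sum: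
  assumes "csubspace T" "finite F" "\<And>k. k \<in> F \<Longrightarrow> f k \<in> T"
  shows "(\<lambda>b. \<Sum>k\<in>F. f k b) \<in> T"
  using assms(2,3)
proof (induction F rule: finite_induct)
  case empty
  then show ?case using csubspace_zero[OF assms(1)] by simp
next
  case (insert x F)
  then show ?case using csubspace_add[OF assms(1), of "f x" "\<lambda>b. \<Sum>k\<in>F. f k b"] by simp
qed

lemma cspan_least:
  assumes "csubspace T" "S \<subseteq> T"
  shows "cspan S \<subseteq> T"
proof
  fix v assume "v \<in> cspan S"
  then obtain F c where F: "finite F" "F \<subseteq> S" and v: "v = (\<lambda>b. \<Sum>x\<in>F. c x * x b)"
    unfolding cspan_def by blast
  show "v \<in> T" unfolding v
    by (rule csubspace_sum[OF assms(1) F(1)]) (use F(2) assms csubspace_scale in blast)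
qed

lemma cspan_superset: "S \<subseteq> cspan S"
proof
  fix x assume "x \<in> S"
  then show "x \<in> cspan S" unfolding cspan_def
    by (intro CollectI exI[of _ "{x}"] exI[of _ "\<lambda>_. 1"]) auto
qed

lemma cspan_add:
  assumes "x \<in> cspan S" "y \<in> cspan S"
  shows "(\<lambda>b. x b + y b) \<in> cspan S"
proof -
  obtain F1 c1 F2 c2 where F: "finite F1" "F1 \<subseteq> S" "finite F2" "F2 \<subseteq> S"
    and xy: "x = (\<lambda>b. \<Sum>z\<in>F1. c1 z * z b)" "y = (\<lambda>b. \<Sum>z\<in>F2. c2 z * z b)"
    using assms unfolding cspan_def by blast
  define c where "c z = (if z \<in> F1 then c1 z else 0) + (if z \<in> F2 then c2 z else 0)" for z
  have "x b + y b = (\<Sum>z\<in>F1 \<union> F2. c z * z b)" for b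
  proof -
    have restrict1: "(\<Sum>z\<in>F1 \<union> F2. if z \<in> F1 then c1 z * z b else 0) = (\<Sum>z\<in>F1. c1 z * z b)"
      using sum.inter_restrict[of "F1 \<union> F2" "\<lambda>z. c1 z * z b" F1] F by simp
    have restrict2: "(\<Sum>z\<in>F1 \<union> F2. if z \<in> F2 then c2 z * z b else 0) = (\<Sum>z\<in>F2. c2 z * z b)"
      using sum.inter_restrict[of "F1 \<union> F2" "\<lambda>z. c2 z * z b" F2] F by simp
    have "(\<Sum>z\<in>F1 \<union> F2. c z * z b)
        = (\<Sum>z\<in>F1 \<union> F2. (if z \<in> F1 then c1 z * z b else 0) + (if z \<in> F2 then c2 z * z b else 0))"
      by (rule sum.cong) (auto simp: c_def distrib_right)
    then show ?thesis unfolding xy using restrict1 restrict2 by (simp add: sum.distrib)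
  qed
  then show ?thesis unfolding cspan_def
    by (intro CollectI exI[of _ "F1 \<union> F2"] exI[of _ c]) (use F in auto)
qed

lemma cspan_scale:
  assumes "x \<in> cspan S"
  shows "(\<lambda>b. a * x b) \<in> cspan S"
proof -
  obtain F c where F: "finite F" "F \<subseteq> S" and x: "x = (\<lambda>b. \<Sum>z\<in>F. c z * z b)"
    using assms unfolding cspan_def by blast
  have "(\<lambda>b. a * x b) = (\<lambda>b. \<Sum>z\<in>F. (a * c z) * z b)"
    unfolding x by (simp add: sum_distrib_left mult.assoc)
  then show ?thesis unfolding cspan_def
    by (intro CollectI exI[of _ F] exI[of _ "\<lambda>z. a * c z"]) (use F in simp)
qed

lemma csubspace_cspan: "csubspace (cspan S)"
  unfolding csubspace_def
proof (intro conjI ballI allI)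
  show "(\<lambda>_. 0) \<in> cspan S" unfolding cspan_def
    by (intro CollectI exI[of _ "{}"]) auto
qed (simp_all add: cspan_add cspan_scale)

lemma cspan_mono: "A \<subseteq> B \<Longrightarrow> cspan A \<subseteq> cspan B"
  using cspan_least[OF csubspace_cspan, of A B] cspan_superset[of B] by blast

lemma cspan_eq: "csubspace T \<Longrightarrow> cspan T = T"
  using cspan_least cspan_superset by blast

lemma cspan_UN: "cspan (\<Union>i\<in>I. cspan (A i)) = cspan (\<Union>i\<in>I. A i)"
proof
  show "cspan (\<Union>i\<in>I. cspan (A i)) \<subseteq> cspan (\<Union>i\<in>I. A i)"
    by (intro cspan_least[OF csubspace_cspan] UN_least cspan_mono) auto
  show "cspan (\<Union>i\<in>I. A i) \<subseteq> cspan (\<Union>i\<in>I. cspan (A i))"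
    by (intro cspan_mono UN_mono order_refl cspan_superset)
qed

definition linear_map :: "('v state \<Rightarrow> 'w state) \<Rightarrow> bool" where
  "linear_map f \<longleftrightarrow> (\<forall>x y. f (\<lambda>b. x b + y b) = (\<lambda>b. f x b + f y b))
     \<and> (\<forall>c x. f (\<lambda>b. c * x b) = (\<lambda>b. c * f x b))"

lemma linear_map_zero:
  assumes "linear_map f"
  shows "f (\<lambda>_. 0) = (\<lambda>_. 0)"
proof -
  have "\<forall>c x. f (\<lambda>b. c * x b) = (\<lambda>b. c * f x b)"
    using assms unfolding linear_map_def by blast
  from this[rule_format, of 0 "\<lambda>_. 0"] show ?thesis by simp
qed

lemma csubspace_image:
  assumes "linear_map f" "csubspace T"
  shows "csubspace (f ` T)"
  unfolding csubspace_def
proof (intro conjI ballI allI)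
  show "(\<lambda>_. 0) \<in> f ` T"
    using linear_map_zero[OF assms(1)] csubspace_zero[OF assms(2)] by (metis image_eqI)
next
  fix x y assume "x \<in> f ` T" "y \<in> f ` T"
  then obtain u v where uv: "u \<in> T" "v \<in> T" and "x = f u" "y = f v" by blast
  then have "(\<lambda>b. x b + y b) = f (\<lambda>b. u b + v b)"
    using assms(1) unfolding linear_map_def by simp
  then show "(\<lambda>b. x b + y b) \<in> f ` T" using csubspace_add[OF assms(2) uv] by simp
next
  fix c x assume "x \<in> f ` T"
  then obtain u where u: "u \<in> T" and "x = f u" by blast
  then have "(\<lambda>b. c * x b) = f (\<lambda>b. c * u b)"
    using assms(1) unfolding linear_map_def by simp
  then show "(\<lambda>b. c * x b) \<in> f ` T" using csubspace_scale[OF assms(2) u] by simp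
qed

lemma csubspace_vimage:
  assumes "linear_map f" "csubspace T"
  shows "csubspace {x. f x \<in> T}"
  unfolding csubspace_def
proof (intro conjI ballI allI)
  show "(\<lambda>_. 0) \<in> {x. f x \<in> T}"
    using linear_map_zero[OF assms(1)] csubspace_zero[OF assms(2)] by simp
next
  fix x y assume "x \<in> {x. f x \<in> T}" "y \<in> {x. f x \<in> T}"
  then show "(\<lambda>b. x b + y b) \<in> {x. f x \<in> T}"
    using assms(1) csubspace_add[OF assms(2)] unfolding linear_map_def by simp
next
  fix c x assume "x \<in> {x. f x \<in> T}"
  then show "(\<lambda>b. c * x b) \<in> {x. f x \<in> T}"
    using assms(1) csubspace_scale[OF assms(2)] unfolding linear_map_def by simp
qed

lemma cspan_image: "linear_map f \<Longrightarrow> f ` cspan X = cspan (f ` X)"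
proof
  assume f: "linear_map f"
  have "cspan X \<subseteq> {x. f x \<in> cspan (f ` X)}"
    by (rule cspan_least[OF csubspace_vimage[OF f csubspace_cspan]]) (use cspan_superset in blast)
  then show "f ` cspan X \<subseteq> cspan (f ` X)" by blast
  show "cspan (f ` X) \<subseteq> f ` cspan X"
    by (rule cspan_least[OF csubspace_image[OF f csubspace_cspan]]) (use cspan_superset in blast)
qed

lemma linear_map_mv: "linear_map (mv A)"
  unfolding linear_map_def mv_def
  by (simp add: distrib_left sum.distrib sum_distrib_left mult.left_commute)

lemma linear_map_tens0: "linear_map (tens0 W)"
  unfolding linear_map_def tens0_def by auto

lemma cspan_kraus_image_cspan:
  "cspan {mv (E k) \<psi> | k \<psi>. k \<in> K \<and> \<psi> \<in> cspan X} = cspan {mv (E k) \<psi> | k \<psi>. k \<in> K \<and> \<psi> \<in> X}"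
    (is "cspan ?L = cspan ?R")
proof
  have "mv (E k) \<psi> \<in> cspan ?R" if "k \<in> K" "\<psi> \<in> cspan X" for k \<psi>
  proof -
    have "X \<subseteq> {x. mv (E k) x \<in> cspan ?R}"
    proof
      fix x assume "x \<in> X"
      then have "mv (E k) x \<in> ?R" using that(1) by auto
      then show "x \<in> {x. mv (E k) x \<in> cspan ?R}" using cspan_superset[of ?R] by auto
    qed
    then have "cspan X \<subseteq> {x. mv (E k) x \<in> cspan ?R}"
      by (rule cspan_least[OF csubspace_vimage[OF linear_map_mv csubspace_cspan]])
    then show ?thesis using that(2) by blast
  qed
  then show "cspan ?L \<subseteq> cspan ?R" by (intro cspan_least[OF csubspace_cspan]) blast
  have "?R \<subseteq> ?L" using cspan_superset by blast
  then show "cspan ?R \<subseteq> cspan ?L" by (rule cspan_mono)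
qed

section \<open>Matrices and the inner product\<close>

definition basis_vec :: "'v bas \<Rightarrow> 'v state" where
  "basis_vec j = (\<lambda>i. if i = j then 1 else 0)"

lemma mv_basis_vec: "mv A (basis_vec j) = (\<lambda>i. A i j)"
  unfolding mv_def basis_vec_def by (simp add: if_distrib cong: if_cong)

lemma op_eqI:
  assumes "\<And>x. mv A x = mv B x"
  shows "A = B"
proof (intro ext)
  fix i j
  have "(\<lambda>i. A i j) = (\<lambda>i. B i j)" using assms[of "basis_vec j"] unfolding mv_basis_vec .
  then show "A i j = B i j" by (rule fun_cong)
qed

lemma mv_mmul: "mv (mmul A B) x = mv A (mv B x)"
  unfolding mv_def mmul_def
  by (rule ext, simp add: sum_distrib_left sum_distrib_right mult.assoc, subst sum.swap, simp)

lemma mv_add: "mv A (\<lambda>b. x b + y b) = (\<lambda>b. mv A x b + mv A y b)"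
  unfolding mv_def by (simp only: distrib_left sum.distrib)

lemma mv_scale: "mv A (\<lambda>b. c * x b) = (\<lambda>b. c * mv A x b)"
  unfolding mv_def by (simp add: sum_distrib_left mult_ac)

lemma mv_diff: "mv A (\<lambda>b. x b - y b) = (\<lambda>b. mv A x b - mv A y b)"
  unfolding mv_def by (simp add: right_diff_distrib sum_subtractf)

lemma mv_op_sum: "mv (\<lambda>a b. \<Sum>k\<in>K. F k a b) x = (\<lambda>i. \<Sum>k\<in>K. mv (F k) x i)"
  unfolding mv_def by (rule ext, simp only: sum_distrib_right, subst sum.swap, rule refl)

lemma mv_sandwich: "mv (sandwich E \<rho>) x = mv E (mv \<rho> (mv (adj E) x))"
  unfolding sandwich_def by (simp add: mv_mmul)

lemma adj_adj [simp]: "adj (adj A) = A"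
  unfolding adj_def by simp

lemma cinner_adj_left: "cinner (mv A x) y = cinner x (mv (adj A) y)"
  unfolding cinner_def mv_def adj_def
  by (simp add: sum_distrib_left sum_distrib_right mult_ac, subst sum.swap, simp add: mult_ac)

lemma cinner_adj_right: "cinner x (mv A y) = cinner (mv (adj A) x) y"
  using cinner_adj_left[of "adj A" x y] by simp

lemma cinner_commute: "cinner y x = cnj (cinner x y)"
  unfolding cinner_def by (simp add: mult.commute)

lemma cinner_basis_vec: "cinner (basis_vec i) v = v i"
  unfolding cinner_def basis_vec_def
  by (subst sum.cong[OF refl, of _ _ "\<lambda>b. if b = i then v b else 0"]) auto

lemma cinner_add_left: "cinner (\<lambda>b. x b + y b) z = cinner x z + cinner y z"
  unfolding cinner_def by (simp only: complex_cnj_add distrib_right sum.distrib)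

lemma cinner_add_right: "cinner x (\<lambda>b. y b + z b) = cinner x y + cinner x z"
  unfolding cinner_def by (simp only: distrib_left sum.distrib)

lemma cinner_diff_left: "cinner (\<lambda>b. x b - y b) z = cinner x z - cinner y z"
  unfolding cinner_def by (simp only: complex_cnj_diff left_diff_distrib sum_subtractf)

lemma cinner_diff_right: "cinner x (\<lambda>b. y b - z b) = cinner x y - cinner x z"
  unfolding cinner_def by (simp only: right_diff_distrib sum_subtractf)

lemma cinner_scale_left: "cinner (\<lambda>b. c * x b) z = cnj c * cinner x z"
  unfolding cinner_def by (simp add: sum_distrib_left mult.assoc)

lemma cinner_scale_right: "cinner x (\<lambda>b. c * y b) = c * cinner x y"
  unfolding cinner_def by (simp add: sum_distrib_left mult.left_commute)

lemma cinner_zero_left [simp]: "cinner (\<lambda>_. 0) z = 0"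
  unfolding cinner_def by simp

lemma cinner_zero_right [simp]: "cinner z (\<lambda>_. 0) = 0"
  unfolding cinner_def by simp

lemma cinner_sum_right: "cinner w (\<lambda>b. \<Sum>j\<in>J. f j b) = (\<Sum>j\<in>J. cinner w (f j))"
  unfolding cinner_def by (simp only: sum_distrib_left, subst sum.swap, rule refl)

lemma cinner_self: "cinner x x = of_real (\<Sum>b\<in>UNIV. (cmod (x b))\<^sup>2)"
  unfolding cinner_def of_real_sum
proof (rule sum.cong[OF refl])
  fix b
  show "cnj (x b) * x b = complex_of_real ((cmod (x b))\<^sup>2)"
    using complex_norm_square[of "x b"] by (simp add: mult.commute)
qed

lemma cinner_self_nonneg: "0 \<le> Re (cinner x x)"
  and cinner_self_real: "Im (cinner x x) = 0"
  unfolding cinner_self by (auto intro: sum_nonneg)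

lemma cinner_self_eq_0:
  assumes "cinner x x = 0"
  shows "x = (\<lambda>_. 0)"
proof
  fix b
  have "(\<Sum>b\<in>UNIV. (cmod (x b))\<^sup>2) = 0"
    using assms unfolding cinner_self by (simp only: of_real_eq_0_iff)
  then have "(cmod (x b))\<^sup>2 = 0" by (subst (asm) sum_nonneg_eq_0_iff) auto
  then show "x b = 0" by simp
qed

lemma quadratic_form_add_scaled:
  "cinner (\<lambda>b. x b + s * y b) (mv A (\<lambda>b. x b + s * y b)) =
    cinner x (mv A x) + s * cinner x (mv A y) + cnj s * cinner y (mv A x)
      + cnj s * s * cinner y (mv A y)"
  unfolding mv_add mv_scale cinner_add_left cinner_add_right cinner_scale_left cinner_scale_right
  by (simp only: distrib_left mult.assoc add.assoc)

section \<open>Orthogonal projection\<close>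

lemma inner_vec_lambda: "inner (vec_lambda x) (vec_lambda y) = Re (cinner x y)"
  unfolding inner_vec_def cinner_def inner_complex_def by simp

lemma subspace_vec_lambda_image:
  assumes "csubspace S"
  shows "subspace (vec_lambda ` S)"
  unfolding subspace_def
proof (intro conjI ballI allI)
  show "0 \<in> vec_lambda ` S"
    using csubspace_zero[OF assms] by (metis image_eqI zero_vec_def)
next
  fix a b assume "a \<in> vec_lambda ` S" "b \<in> vec_lambda ` S"
  then obtain u v where "u \<in> S" "v \<in> S" "a = vec_lambda u" "b = vec_lambda v" by blast
  moreover have "vec_lambda u + vec_lambda v = vec_lambda (\<lambda>b. u b + v b)"
    by (simp add: vec_eq_iff)
  ultimately show "a + b \<in> vec_lambda ` S" using csubspace_add[OF assms] by auto
next
  fix c a assume "a \<in> vec_lambda ` S"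
  then obtain u where "u \<in> S" "a = vec_lambda u" by blast
  moreover have "c *\<^sub>R vec_lambda u = vec_lambda (\<lambda>b. of_real c * u b)"
    unfolding vec_eq_iff vector_scaleR_component by (simp add: scaleR_conv_of_real)
  ultimately show "c *\<^sub>R a \<in> vec_lambda ` S" using csubspace_scale[OF assms] by auto
qed

text \<open>The real decomposition of the Analysis library suffices: orthogonality to both \<open>w\<close>
  and \<open>\<i> w\<close> controls the real and the imaginary part of the complex inner product.\<close>

lemma orthogonal_decomposition:
  assumes "csubspace S"
  shows "\<exists>y\<in>S. \<forall>w\<in>S. cinner w (\<lambda>b. x b - y b) = 0"
proof (rule orthogonal_subspace_decomp_exists[of "vec_lambda ` S" "vec_lambda x"])
  have span: "span (vec_lambda ` S) = vec_lambda ` S"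
    using subspace_vec_lambda_image[OF assms] by simp
  fix y z assume y: "y \<in> span (vec_lambda ` S)"
    and z: "\<And>w. w \<in> span (vec_lambda ` S) \<Longrightarrow> orthogonal z w"
    and xyz: "vec_lambda x = y + z"
  from y span obtain y0 where y0: "y0 \<in> S" "y = vec_lambda y0" by auto
  define z0 where "z0 = (\<lambda>b. x b - y0 b)"
  have z0: "z = vec_lambda z0"
    using xyz unfolding z0_def y0(2) by (simp add: vec_eq_iff)
  have "cinner w z0 = 0" if "w \<in> S" for w
  proof -
    have "Re (cinner z0 w) = 0" "Re (cinner z0 (\<lambda>b. \<i> * w b)) = 0"
      using z[of "vec_lambda w"] z[of "vec_lambda (\<lambda>b. \<i> * w b)"] that span
        csubspace_scale[OF assms that]
      unfolding orthogonal_def z0 inner_vec_lambda by auto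
    then have "Re (cinner w z0) = 0" "Re (cinner (\<lambda>b. \<i> * w b) z0) = 0"
      by (simp_all add: cinner_commute[of z0])
    then show ?thesis by (simp add: cinner_scale_left complex_eq_iff)
  qed
  then show "\<exists>y\<in>S. \<forall>w\<in>S. cinner w (\<lambda>b. x b - y b) = 0"
    using y0(1) unfolding z0_def by blast
qed

lemma orthogonal_decomposition_unique:
  assumes "csubspace S" "y1 \<in> S" "y2 \<in> S"
    and "\<forall>w\<in>S. cinner w (\<lambda>b. x b - y1 b) = 0" "\<forall>w\<in>S. cinner w (\<lambda>b. x b - y2 b) = 0"
  shows "y1 = y2"
proof -
  define d where "d = (\<lambda>b. y1 b - y2 b)"
  have "(\<lambda>b. y1 b + (-1) * y2 b) \<in> S"
    using csubspace_add[OF assms(1,2) csubspace_scale[OF assms(1,3)]] .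
  then have "d \<in> S" unfolding d_def by simp
  have "d = (\<lambda>b. (x b - y2 b) - (x b - y1 b))" unfolding d_def by (simp add: fun_eq_iff)
  then have "cinner d d = cinner d (\<lambda>b. x b - y2 b) - cinner d (\<lambda>b. x b - y1 b)"
    by (simp only: cinner_diff_right[symmetric])
  also have "\<dots> = 0" using assms(4,5) \<open>d \<in> S\<close> by simp
  finally have "cinner d d = 0" .
  then have "d = (\<lambda>_. 0)" by (rule cinner_self_eq_0)
  then show ?thesis unfolding d_def by (simp add: fun_eq_iff)
qed

definition orth_proj :: "'v::finite state set \<Rightarrow> 'v state \<Rightarrow> 'v state" where
  "orth_proj S x = (SOME y. y \<in> S \<and> (\<forall>w\<in>S. cinner w (\<lambda>b. x b - y b) = 0))"

lemma
  assumes "csubspace S"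
  shows orth_proj_mem: "orth_proj S x \<in> S"
    and orth_proj_orthogonal: "w \<in> S \<Longrightarrow> cinner w (\<lambda>b. x b - orth_proj S x b) = 0"
proof -
  have "orth_proj S x \<in> S \<and> (\<forall>w\<in>S. cinner w (\<lambda>b. x b - orth_proj S x b) = 0)"
    unfolding orth_proj_def
    by (rule someI_ex[where P = "\<lambda>y. y \<in> S \<and> (\<forall>w\<in>S. cinner w (\<lambda>b. x b - y b) = 0)"])
      (use orthogonal_decomposition[OF assms, of x] in blast)
  then show "orth_proj S x \<in> S" "w \<in> S \<Longrightarrow> cinner w (\<lambda>b. x b - orth_proj S x b) = 0"
    by auto
qed

lemma orth_proj_eqI:
  assumes "csubspace S" "y \<in> S" "\<forall>w\<in>S. cinner w (\<lambda>b. x b - y b) = 0"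
  shows "orth_proj S x = y"
  by (rule orthogonal_decomposition_unique[OF assms(1) orth_proj_mem[OF assms(1)] assms(2)])
    (use orth_proj_orthogonal[OF assms(1)] assms(3) in auto)

definition orth_proj_op :: "'v::finite state set \<Rightarrow> 'v op" where
  "orth_proj_op S = (\<lambda>i j. orth_proj S (basis_vec j) i)"

lemma mv_orth_proj_op:
  assumes "csubspace S"
  shows "mv (orth_proj_op S) x = orth_proj S x"
proof (rule sym, rule orth_proj_eqI[OF assms])
  have mv: "mv (orth_proj_op S) x = (\<lambda>b. \<Sum>j\<in>UNIV. x j * orth_proj S (basis_vec j) b)"
    unfolding mv_def orth_proj_op_def by (simp add: mult.commute)
  show "mv (orth_proj_op S) x \<in> S" unfolding mv
    by (rule csubspace_sum[OF assms]) (simp_all add: csubspace_scale[OF assms orth_proj_mem[OF assms]])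
  show "\<forall>w\<in>S. cinner w (\<lambda>b. x b - mv (orth_proj_op S) x b) = 0"
  proof
    fix w assume w: "w \<in> S"
    have "cinner w (orth_proj S (basis_vec j)) = cinner w (basis_vec j)" for j
      using orth_proj_orthogonal[OF assms w, of "basis_vec j"] by (simp add: cinner_diff_right)
    then have "cinner w (mv (orth_proj_op S) x) = (\<Sum>j\<in>UNIV. x j * cnj (w j))"
      unfolding mv cinner_sum_right cinner_scale_right
      by (simp add: cinner_commute[of w] cinner_basis_vec)
    moreover have "cinner w x = (\<Sum>j\<in>UNIV. x j * cnj (w j))"
      unfolding cinner_def by (simp add: mult.commute)
    ultimately show "cinner w (\<lambda>b. x b - mv (orth_proj_op S) x b) = 0"
      unfolding cinner_diff_right by simp
  qed
qed

lemma orth_proj_op_is_projector: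
  assumes "csubspace Q"
  shows "adj (orth_proj_op Q) = orth_proj_op Q \<and> mmul (orth_proj_op Q) (orth_proj_op Q) = orth_proj_op Q
    \<and> range (mv (orth_proj_op Q)) = Q"
proof (intro conjI)
  have fix_Q: "orth_proj Q q = q" if "q \<in> Q" for q
    using orth_proj_eqI[OF assms that] by simp
  show "range (mv (orth_proj_op Q)) = Q"
    using orth_proj_mem[OF assms] by (auto simp: mv_orth_proj_op[OF assms]) (metis fix_Q rangeI)
  show "mmul (orth_proj_op Q) (orth_proj_op Q) = orth_proj_op Q"
    by (rule op_eqI) (simp add: mv_mmul mv_orth_proj_op[OF assms] fix_Q orth_proj_mem[OF assms])
  have "cinner (orth_proj Q x) y = cinner x (orth_proj Q y)" for x y
  proof -
    have "cinner (orth_proj Q x) (\<lambda>b. y b - orth_proj Q y b) = 0"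
      "cinner (\<lambda>b. x b - orth_proj Q x b) (orth_proj Q y) = 0"
      using orth_proj_orthogonal[OF assms orth_proj_mem[OF assms]]
      by (auto simp: cinner_commute[of "\<lambda>b. x b - orth_proj Q x b"])
    then show ?thesis unfolding cinner_diff_right cinner_diff_left by simp
  qed
  then have "cinner x (mv (adj (orth_proj_op Q)) y) = cinner x (mv (orth_proj_op Q) y)" for x y
    by (simp add: cinner_adj_left[symmetric] mv_orth_proj_op[OF assms])
  then have "mv (adj (orth_proj_op Q)) y = mv (orth_proj_op Q) y" for y
    using cinner_self_eq_0[of "\<lambda>b. mv (adj (orth_proj_op Q)) y b - mv (orth_proj_op Q) y b"]
    by (simp add: cinner_diff_right fun_eq_iff)
  then show "adj (orth_proj_op Q) = orth_proj_op Q" by (rule op_eqI)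
qed

lemma projector_eq_orth_proj_op:
  assumes "csubspace Q" "adj P = P" "mmul P P = P" "range (mv P) = Q"
  shows "P = orth_proj_op Q"
proof (rule op_eqI)
  fix x
  have "cinner w (\<lambda>b. x b - mv P x b) = 0" if "w \<in> Q" for w
  proof -
    obtain u where u: "w = mv P u" using \<open>w \<in> Q\<close> assms(4) by auto
    have "mv P (\<lambda>b. x b - mv P x b) = (\<lambda>_. 0)"
      unfolding mv_diff mv_mmul[symmetric] assms(3) by simp
    then show ?thesis unfolding u cinner_adj_left assms(2) by simp
  qed
  then have "orth_proj Q x = mv P x"
    using assms(4) by (intro orth_proj_eqI[OF assms(1)]) auto
  then show "mv P x = mv (orth_proj_op Q) x" by (simp add: mv_orth_proj_op[OF assms(1)])
qed

lemma proj_eq_orth_proj_op: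
  assumes "csubspace Q"
  shows "proj Q = orth_proj_op Q"
proof -
  have "\<exists>!P. adj P = P \<and> mmul P P = P \<and> range (mv P) = Q"
    by (rule ex1I[of _ "orth_proj_op Q"])
      (use orth_proj_op_is_projector[OF assms] projector_eq_orth_proj_op[OF assms] in auto)
  then show ?thesis unfolding proj_def
    by (rule the1_equality) (rule orth_proj_op_is_projector[OF assms])
qed

lemma supp_proj:
  assumes "csubspace Q"
  shows "supp (proj Q) = Q"
  using orth_proj_op_is_projector[OF assms] by (simp add: supp_def proj_eq_orth_proj_op[OF assms])

section \<open>Positive operators\<close>

lemma positive_op_proj:
  assumes "csubspace Q"
  shows "positive_op (proj Q)"
  unfolding positive_op_def
proof
  fix \<psi>
  let ?P = "proj Q"
  have P: "adj ?P = ?P" "mmul ?P ?P = ?P"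
    using orth_proj_op_is_projector[OF assms] by (simp_all add: proj_eq_orth_proj_op[OF assms])
  have "cinner \<psi> (mv ?P \<psi>) = cinner (mv ?P \<psi>) (mv ?P \<psi>)"
    by (metis P cinner_adj_right mv_mmul)
  then show "cinner \<psi> (mv ?P \<psi>) \<in> \<real> \<and> 0 \<le> Re (cinner \<psi> (mv ?P \<psi>))"
    using cinner_self_nonneg[of "mv ?P \<psi>"] cinner_self_real[of "mv ?P \<psi>"]
    by (simp add: complex_is_Real_iff)
qed

lemma positive_op_selfadjoint:
  assumes "positive_op A"
  shows "adj A = A"
proof -
  have real: "Im (cinner v (mv A v)) = 0" for v
    using assms unfolding positive_op_def by (simp add: complex_is_Real_iff)
  have polarization: "cinner y (mv A x) = cnj (cinner x (mv A y))" for x y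
  proof -
    define a where "a = cinner x (mv A y)"
    define b where "b = cinner y (mv A x)"
    have "Im (cinner x (mv A x) + 1 * a + cnj 1 * b + cnj 1 * 1 * cinner y (mv A y)) = 0"
      using real[of "\<lambda>b. x b + 1 * y b"] unfolding quadratic_form_add_scaled a_def b_def .
    then have "Im a + Im b = 0" using real[of x] real[of y] by simp
    moreover have "Im (cinner x (mv A x) + \<i> * a + cnj \<i> * b + cnj \<i> * \<i> * cinner y (mv A y)) = 0"
      using real[of "\<lambda>b. x b + \<i> * y b"] unfolding quadratic_form_add_scaled a_def b_def .
    then have "Re a - Re b = 0" using real[of x] real[of y] by simp
    ultimately show ?thesis unfolding a_def[symmetric] b_def[symmetric] by (simp add: complex_eq_iff)
  qed
  show ?thesis
  proof (intro ext)
    fix i j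
    have "A i j = cnj (A j i)"
      using polarization[of "basis_vec i" "basis_vec j"] unfolding cinner_basis_vec mv_basis_vec .
    then show "adj A i j = A i j" unfolding adj_def by simp
  qed
qed

lemma linear_coeff_zero_if_quadratic_nonneg:
  fixes a b :: real
  assumes "\<And>t. 0 \<le> a * t + b * t\<^sup>2"
  shows "a = 0"
proof (rule ccontr)
  assume "a \<noteq> 0"
  define c where "c = \<bar>b\<bar> + 1"
  have c: "c > 0" "b < c" unfolding c_def by auto
  have "0 \<le> a * (- a / c) + b * (- a / c)\<^sup>2" by (rule assms)
  also have "\<dots> = a\<^sup>2 * (b - c) / c\<^sup>2"
    using c by (simp add: field_simps power2_eq_square)
  also have "\<dots> < 0" using c \<open>a \<noteq> 0\<close> by (simp add: divide_neg_pos mult_pos_neg)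
  finally show False by simp
qed

lemma positive_op_null:
  assumes "positive_op A" "cinner v (mv A v) = 0"
  shows "mv A v = (\<lambda>_. 0)"
proof -
  define w where "w = mv A v"
  have Avw: "cinner v (mv A w) = cinner w w"
    using cinner_adj_right[of v A w] positive_op_selfadjoint[OF assms(1)] unfolding w_def by simp
  have "0 \<le> (2 * Re (cinner w w)) * t + Re (cinner w (mv A w)) * t\<^sup>2" for t :: real
  proof -
    have "0 \<le> Re (cinner (\<lambda>b. v b + of_real t * w b) (mv A (\<lambda>b. v b + of_real t * w b)))"
      using assms(1) unfolding positive_op_def by blast
    also have "\<dots> = (2 * Re (cinner w w)) * t + Re (cinner w (mv A w)) * t\<^sup>2"
      using assms(2) unfolding quadratic_form_add_scaled Avw w_def[symmetric]
      by (simp add: power2_eq_square)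
    finally show ?thesis .
  qed
  then have "Re (cinner w w) = 0" using linear_coeff_zero_if_quadratic_nonneg by fastforce
  then have "cinner w w = 0" using cinner_self_real[of w] by (simp add: complex_eq_iff)
  then show ?thesis unfolding w_def by (rule cinner_self_eq_0)
qed

section \<open>The range of a Kraus sum\<close>

lemma mem_csubspace_if_orthogonal:
  assumes "csubspace S" "\<And>z. \<forall>w\<in>S. cinner w z = 0 \<Longrightarrow> cinner z g = 0"
  shows "g \<in> S"
proof -
  obtain y where y: "y \<in> S" and orth: "\<forall>w\<in>S. cinner w (\<lambda>b. g b - y b) = 0"
    using orthogonal_decomposition[OF assms(1)] by blast
  define z where "z = (\<lambda>b. g b - y b)"
  have "cinner z g = 0" using assms(2) orth unfolding z_def by blast
  moreover have "cinner z y = 0" using orth y cinner_commute[of z y] unfolding z_def by simp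
  moreover have "cinner z z = cinner z g - cinner z y"
    using cinner_diff_right[of z g y] unfolding z_def[symmetric] .
  ultimately have "z = (\<lambda>_. 0)" using cinner_self_eq_0 by simp
  then have "g = y" unfolding z_def by (simp add: fun_eq_iff)
  with y show ?thesis by simp
qed

lemma kraus_sum_null:
  assumes "finite K" "positive_op \<rho>" "k \<in> K"
    and "cinner z (mv (\<lambda>a b. \<Sum>k\<in>K. sandwich (E k) \<rho> a b) z) = 0"
  shows "mv \<rho> (mv (adj (E k)) z) = (\<lambda>_. 0)"
proof (rule positive_op_null[OF assms(2)])
  define q where "q j = cinner (mv (adj (E j)) z) (mv \<rho> (mv (adj (E j)) z))" for j
  have q: "0 \<le> Re (q j)" "Im (q j) = 0" for j
    using assms(2) unfolding positive_op_def q_def by (auto simp: complex_is_Real_iff)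
  have "(\<Sum>j\<in>K. q j) = 0"
    using assms(4) unfolding mv_op_sum mv_sandwich cinner_sum_right q_def
    by (simp add: cinner_adj_right)
  then have "(\<Sum>j\<in>K. Re (q j)) = 0" by (simp add: Re_sum[symmetric])
  then have "\<forall>j\<in>K. Re (q j) = 0" using sum_nonneg_eq_0_iff[OF assms(1), of "\<lambda>j. Re (q j)"] q(1) by simp
  then have "Re (q k) = 0" using assms(3) by blast
  then show "q k = 0" using q(2) by (simp add: complex_eq_iff)
qed

lemma supp_kraus_sum:
  assumes "finite K" "positive_op \<rho>"
  shows "supp (\<lambda>a b. \<Sum>k\<in>K. sandwich (E k) \<rho> a b)
    = cspan {mv (E k) \<psi> | k \<psi>. k \<in> K \<and> \<psi> \<in> supp \<rho>}"
    (is "supp ?M = cspan ?G")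
proof
  have mv_M: "mv ?M x = (\<lambda>i. \<Sum>k\<in>K. mv (E k) (mv \<rho> (mv (adj (E k)) x)) i)" for x
    unfolding mv_op_sum mv_sandwich ..
  show "supp ?M \<subseteq> cspan ?G"
  proof
    fix v assume "v \<in> supp ?M"
    then obtain x where v: "v = mv ?M x" unfolding supp_def by auto
    show "v \<in> cspan ?G" unfolding v mv_M
    proof (rule csubspace_sum[OF csubspace_cspan assms(1)])
      fix k assume "k \<in> K"
      then have "mv (E k) (mv \<rho> (mv (adj (E k)) x)) \<in> ?G" by (auto simp: supp_def)
      then show "mv (E k) (mv \<rho> (mv (adj (E k)) x)) \<in> cspan ?G" by (rule subsetD[OF cspan_superset])
    qed
  qed
  have supp_M: "csubspace (supp ?M)"
    unfolding supp_def by (rule csubspace_image[OF linear_map_mv]) (simp add: csubspace_def)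
  have "mv (E k) (mv \<rho> u) \<in> supp ?M" if "k \<in> K" for k u
  proof (rule mem_csubspace_if_orthogonal[OF supp_M])
    fix z assume "\<forall>w\<in>supp ?M. cinner w z = 0"
    then have "cinner z (mv ?M z) = 0" using cinner_commute[of z] by (simp add: supp_def)
    then have "mv \<rho> (mv (adj (E k)) z) = (\<lambda>_. 0)" by (rule kraus_sum_null[OF assms that])
    moreover have "cinner z (mv (E k) (mv \<rho> u)) = cinner (mv \<rho> (mv (adj (E k)) z)) u"
      by (simp add: cinner_adj_right positive_op_selfadjoint[OF assms(2)])
    ultimately show "cinner z (mv (E k) (mv \<rho> u)) = 0" by simp
  qed
  then show "cspan ?G \<subseteq> supp ?M"
    by (intro cspan_least[OF supp_M]) (auto simp: supp_def)
qed

section \<open>Complete abstractions\<close>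

lemma complete_abs_kraus:
  fixes f :: "'v::finite op \<Rightarrow> 'v op"
  assumes "finite K" "\<forall>\<rho>\<in>dens. f \<rho> = (\<lambda>a b. \<Sum>k\<in>K. sandwich (E k) \<rho> a b)"
  shows "complete_abs f (\<lambda>Q. cspan {mv (E k) \<psi> | k \<psi>. k \<in> K \<and> \<psi> \<in> Q})"
  unfolding complete_abs_def
proof (intro allI impI)
  fix R :: "'v op set" assume R: "R \<subseteq> dens"
  have "supp (f \<rho>) = cspan {mv (E k) \<psi> | k \<psi>. k \<in> K \<and> \<psi> \<in> supp \<rho>}" if "\<rho> \<in> R" for \<rho>
    using that R assms(2) supp_kraus_sum[OF assms(1), of \<rho> E] by (auto simp: dens_def)
  then have "alpha_s (f ` R) = cspan (\<Union>\<rho>\<in>R. cspan {mv (E k) \<psi> | k \<psi>. k \<in> K \<and> \<psi> \<in> supp \<rho>})"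
    unfolding alpha_s_def image_image by simp
  also have "\<dots> = cspan (\<Union>\<rho>\<in>R. {mv (E k) \<psi> | k \<psi>. k \<in> K \<and> \<psi> \<in> supp \<rho>})"
    by (rule cspan_UN)
  also have "(\<Union>\<rho>\<in>R. {mv (E k) \<psi> | k \<psi>. k \<in> K \<and> \<psi> \<in> supp \<rho>})
      = {mv (E k) \<psi> | k \<psi>. k \<in> K \<and> \<psi> \<in> (\<Union>\<rho>\<in>R. supp \<rho>)}"
    by blast
  also have "cspan \<dots> = cspan {mv (E k) \<psi> | k \<psi>. k \<in> K \<and> \<psi> \<in> alpha_s R}"
    unfolding alpha_s_def by (rule cspan_kraus_image_cspan[symmetric])
  finally show "alpha_s (f ` R) = cspan {mv (E k) \<psi> | k \<psi>. k \<in> K \<and> \<psi> \<in> alpha_s R}" .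
qed

lemma complete_abs_cong:
  assumes "complete_abs f g" "\<And>Q. csubspace Q \<Longrightarrow> g Q = h Q"
  shows "complete_abs f h"
  unfolding complete_abs_def
proof (intro allI impI)
  fix R :: "'a op set" assume "R \<subseteq> dens"
  then have "alpha_s (f ` R) = g (alpha_s R)" using assms(1) unfolding complete_abs_def by blast
  also have "\<dots> = h (alpha_s R)" unfolding alpha_s_def by (rule assms(2)[OF csubspace_cspan])
  finally show "alpha_s (f ` R) = h (alpha_s R)" .
qed

lemma complete_abs_sandwich:
  assumes "\<forall>\<rho>\<in>dens. f \<rho> = sandwich E \<rho>"
  shows "complete_abs f (\<lambda>Q. mv E ` Q)"
proof (rule complete_abs_cong)
  show "complete_abs f (\<lambda>Q. cspan {mv ((\<lambda>_. E) k) \<psi> | k \<psi>. k \<in> {()} \<and> \<psi> \<in> Q})"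
    using assms by (intro complete_abs_kraus) simp_all
  show "cspan {mv ((\<lambda>_. E) k) \<psi> | k \<psi>. k \<in> {()} \<and> \<psi> \<in> Q} = mv E ` Q" if "csubspace Q" for Q
    using cspan_eq[OF csubspace_image[OF linear_map_mv that]] by (simp add: Setcompr_eq_image)
qed

section \<open>Initialisation\<close>

lemma sum_indicator_mult:
  fixes \<psi> :: "'v::finite bas \<Rightarrow> complex"
  shows "(\<Sum>j\<in>UNIV. (if C \<and> j = m then 1 else 0) * \<psi> j) = (if C then \<psi> m else 0)"
proof (cases C)
  case True
  have "(\<Sum>j\<in>UNIV. (if C \<and> j = m then 1 else 0) * \<psi> j) = (\<Sum>j\<in>UNIV. if j = m then \<psi> j else 0)"
    by (rule sum.cong) (auto simp: True)
  then show ?thesis using True by simp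
qed simp

text \<open>The partial bra \<open>\<langle>k|\<^sub>W\<close>, mapping \<open>\<H>\<^sub>V\<close> to \<open>\<H>\<^sub>V\<^sub>-\<^sub>W\<close>.\<close>

definition partial_bra :: "'v set \<Rightarrow> 'v bas \<Rightarrow> 'v op" where
  "partial_bra W k = (\<lambda>a d. if a \<in> BW (- W) \<and> d = merge W k a then 1 else 0)"

lemma mv_partial_bra:
  "mv (partial_bra W k) \<psi> = (\<lambda>a. if a \<in> BW (- W) then \<psi> (merge W k a) else 0)"
  unfolding mv_def partial_bra_def by (simp only: sum_indicator_mult)

lemma sandwich_partial_bra:
  "sandwich (partial_bra W k) P a b
    = (if a \<in> BW (- W) \<and> b \<in> BW (- W) then P (merge W k a) (merge W k b) else 0)"
proof -
  have left: "mmul (partial_bra W k) P a c = (if a \<in> BW (- W) then P (merge W k a) c else 0)" for c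
    unfolding mmul_def partial_bra_def by (simp only: sum_indicator_mult)
  have "sandwich (partial_bra W k) P a b
      = (\<Sum>c\<in>UNIV. (if b \<in> BW (- W) \<and> c = merge W k b then 1 else 0)
                   * (if a \<in> BW (- W) then P (merge W k a) c else 0))"
    unfolding sandwich_def mmul_def[of "mmul _ P"] left
    by (rule sum.cong) (simp_all add: adj_def partial_bra_def)
  also have "\<dots> = (if a \<in> BW (- W) \<and> b \<in> BW (- W) then P (merge W k a) (merge W k b) else 0)"
    by (subst sum_indicator_mult) auto
  finally show ?thesis .
qed

lemma ptrace_kraus_sum: "ptrace W P = (\<lambda>a b. \<Sum>k\<in>BW W. sandwich (partial_bra W k) P a b)"
proof (intro ext)
  fix i j
  show "ptrace W P i j = (\<Sum>k\<in>BW W. sandwich (partial_bra W k) P i j)"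
    by (cases "i \<in> BW (- W)"; cases "j \<in> BW (- W)") (simp_all add: ptrace_def sandwich_partial_bra)
qed

lemma mv_cyl_ket0bra:
  assumes "k \<in> BW W"
  shows "mv (cyl W (ket0bra k)) \<psi> = (\<lambda>b. if \<forall>v\<in>W. \<not> b v then \<psi> (merge W k b) else 0)"
proof -
  have "cyl W (ket0bra k) b j = (if (\<forall>v\<in>W. \<not> b v) \<and> j = merge W k b then 1 else 0)" for b j
  proof -
    have "(rst W b = (\<lambda>_. False)) = (\<forall>v\<in>W. \<not> b v)"
      unfolding rst_def by (auto simp: fun_eq_iff)
    moreover have "((\<forall>v. v \<notin> W \<longrightarrow> b v = j v) \<and> rst W j = k) = (j = merge W k b)"
      using assms unfolding rst_def merge_def BW_def by (auto simp: fun_eq_iff)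
    ultimately show ?thesis unfolding cyl_def ket0bra_def by auto
  qed
  then show ?thesis unfolding mv_def by (simp only: sum_indicator_mult)
qed

lemma tens0_partial_bra:
  assumes "k \<in> BW W"
  shows "tens0 W (mv (partial_bra W k) \<psi>) = mv (cyl W (ket0bra k)) \<psi>"
proof -
  have "rst (- W) b \<in> BW (- W)" "merge W k (rst (- W) b) = merge W k b" for b
    unfolding rst_def BW_def merge_def by (auto simp: fun_eq_iff)
  then show ?thesis unfolding mv_cyl_ket0bra[OF assms] mv_partial_bra tens0_def
    by (simp only: if_True)
qed

lemma finite_BW: "finite (BW (W :: 'v::finite set))"
  by simp

lemma init_kraus_image:
  assumes "csubspace Q"
  shows "cspan {mv (cyl W (ket0bra k)) \<psi> | k \<psi>. k \<in> BW W \<and> \<psi> \<in> Q}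
       = {tens0 W \<psi> | \<psi>. \<psi> \<in> supp (ptrace W (proj Q))}"
proof -
  have "{tens0 W \<psi> | \<psi>. \<psi> \<in> supp (ptrace W (proj Q))}
      = tens0 W ` cspan {mv (partial_bra W k) \<psi> | k \<psi>. k \<in> BW W \<and> \<psi> \<in> Q}"
    unfolding ptrace_kraus_sum supp_kraus_sum[OF finite_BW positive_op_proj[OF assms]]
      supp_proj[OF assms] by blast
  also have "\<dots> = cspan (tens0 W ` {mv (partial_bra W k) \<psi> | k \<psi>. k \<in> BW W \<and> \<psi> \<in> Q})"
    by (rule cspan_image[OF linear_map_tens0])
  also have "tens0 W ` {mv (partial_bra W k) \<psi> | k \<psi>. k \<in> BW W \<and> \<psi> \<in> Q}
      = {mv (cyl W (ket0bra k)) \<psi> | k \<psi>. k \<in> BW W \<and> \<psi> \<in> Q}"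
  proof (intro equalityI subsetI)
    fix v assume "v \<in> tens0 W ` {mv (partial_bra W k) \<psi> | k \<psi>. k \<in> BW W \<and> \<psi> \<in> Q}"
    then obtain k \<psi> where "v = tens0 W (mv (partial_bra W k) \<psi>)" "k \<in> BW W" "\<psi> \<in> Q" by blast
    then show "v \<in> {mv (cyl W (ket0bra k)) \<psi> | k \<psi>. k \<in> BW W \<and> \<psi> \<in> Q}"
      using tens0_partial_bra by blast
  next
    fix v assume "v \<in> {mv (cyl W (ket0bra k)) \<psi> | k \<psi>. k \<in> BW W \<and> \<psi> \<in> Q}"
    then obtain k \<psi> where "v = mv (cyl W (ket0bra k)) \<psi>" "k \<in> BW W" "\<psi> \<in> Q" by blast
    then show "v \<in> tens0 W ` {mv (partial_bra W k) \<psi> | k \<psi>. k \<in> BW W \<and> \<psi> \<in> Q}"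
      using tens0_partial_bra[symmetric] by blast
  qed
  finally show ?thesis by simp
qed

theorem mainTheorem17:
  fixes W :: "'v::finite set" and U :: "'v op" and P :: "'v state set"
    and S :: "'v prog" and K :: "'k set" and E :: "'k \<Rightarrow> 'v op"
  shows "complete_abs (sem (Skip :: 'v prog)) (\<lambda>Q. Q)
    \<and> complete_abs (sem (Init W))
           (\<lambda>Q. {tens0 W \<psi> | \<psi>. \<psi> \<in> supp (ptrace W (proj Q))})
    \<and> (unitary_op (cyl W U) \<longrightarrow>
           complete_abs (sem (Apply W U)) (\<lambda>Q. {mv (cyl W U) \<psi> | \<psi>. \<psi> \<in> Q}))
    \<and> (local_subspace W P \<longrightarrow>
           complete_abs (sem (Assert W P)) (\<lambda>Q. cspan {mv (cyl W (proj P)) \<psi> | \<psi>. \<psi> \<in> Q}))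
    \<and> (wf_prog S \<and> finite K \<and>
          (\<forall>\<rho>\<in>dens. sem S \<rho> = (\<lambda>a b. \<Sum>k\<in>K. sandwich (E k) \<rho> a b)) \<longrightarrow>
           complete_abs (sem S) (\<lambda>Q. cspan {mv (E k) \<psi> | k \<psi>. k \<in> K \<and> \<psi> \<in> Q}))"
proof (intro conjI impI)
  show "complete_abs (sem (Skip :: 'v prog)) (\<lambda>Q. Q)"
    unfolding complete_abs_def by simp
  show "complete_abs (sem (Init W)) (\<lambda>Q. {tens0 W \<psi> | \<psi>. \<psi> \<in> supp (ptrace W (proj Q))})"
    by (rule complete_abs_cong[OF complete_abs_kraus init_kraus_image]) (simp_all add: finite_BW)
  show "complete_abs (sem (Apply W U)) (\<lambda>Q. {mv (cyl W U) \<psi> | \<psi>. \<psi> \<in> Q})"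
    using complete_abs_sandwich[of "sem (Apply W U)"] by (simp add: Setcompr_eq_image)
  show "complete_abs (sem (Assert W P)) (\<lambda>Q. cspan {mv (cyl W (proj P)) \<psi> | \<psi>. \<psi> \<in> Q})"
    by (rule complete_abs_cong[OF complete_abs_sandwich[of "sem (Assert W P)"]])
      (simp_all add: Setcompr_eq_image cspan_eq csubspace_image linear_map_mv)
qed (intro complete_abs_kraus; simp)

end
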